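(* Let $\Phi = \{\xi = (\tau_L,\delta_L,\tau_R,\delta_R) \in \mathbb{R}^4 : \tau_L > |\delta_L + 1|,\ \tau_R < -|\delta_R+1|\}$ and $\alpha(\xi) = \tau_L\tau_R + (\delta_L - 1)(\delta_R - 1)$. If $\xi \in \Phi$ and $\delta_L + \delta_R \ge 0$, then $\alpha(\xi) < 0$. *)

theory Defs
  imports Main Complex_Main
begin

definition Phi :: "(real \<times> real \<times> real \<times> real) set" where
  "Phi = {(tL, dL, tR, dR). tL > \<bar>dL + 1\<bar> \<and> tR < - \<bar>dR + 1\<bar>}"

fun alpha :: "real \<times> real \<times> real \<times> real \<Rightarrow> real" where
  "alpha (tL, dL, tR, dR) = tL * tR + (dL - 1) * (dR - 1)"

end

theory Submission
  imports Defs
begin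

text \<open>Since \<open>alpha = tL tR + (dL + 1)(dR + 1) - 2 (dL + dR)\<close>, it suffices that
  \<open>tL (-tR) > |dL + 1| |dR + 1| \<ge> (dL + 1)(dR + 1)\<close> on \<open>Phi\<close>.\<close>

lemma alpha_shifted:
  "alpha (tL, dL, tR, dR) = tL * tR + (dL + 1) * (dR + 1) - 2 * (dL + dR)"
  by (simp add: algebra_simps)

lemma Phi_shifted_product_neg:
  fixes tL dL tR dR :: real
  assumes "(tL, dL, tR, dR) \<in> Phi"
  shows "tL * tR + (dL + 1) * (dR + 1) < 0"
proof -
  have tL: "tL > \<bar>dL + 1\<bar>" and tR: "- tR > \<bar>dR + 1\<bar>"
    using assms by (auto simp: Phi_def)
  have "(dL + 1) * (dR + 1) \<le> \<bar>dL + 1\<bar> * \<bar>dR + 1\<bar>"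
    by (metis abs_ge_self abs_mult)
  also have "\<dots> < tL * (- tR)"
    using tL tR by (intro mult_strict_mono') auto
  finally show ?thesis
    by simp
qed

theorem proposition4p2:
  fixes tL dL tR dR :: real
  assumes "(tL, dL, tR, dR) \<in> Phi"
    and "dL + dR \<ge> 0"
  shows "alpha (tL, dL, tR, dR) < 0"
  using Phi_shifted_product_neg [OF assms(1)] assms(2)
  unfolding alpha_shifted by (simp add: algebra_simps)

end
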